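(* There is some $d_0$ such that the following holds for every $d\geq d_0$ and every positive integer $t$. Let $G$ be a finite bipartite graph with average degree $d\geq t^4$ which contains no $C_4$-free subgraph with average degree at least $t$. Then there is a vertex $v\in V(G)$ and disjoint sets $A'\subseteq N(v)$ and $B'\subseteq V(G)\setminus\{v\}$ such that $d(G[A',B'])\geq d^{1/5}$.
   Context: $d(\cdot)$ denotes average degree, $d(F)=2e(F)/|V(F)|$. $N(v)$ is the neighbourhood of $v$ in $G$. For disjoint vertex sets $A',B'$, $G[A',B']$ is the bipartite subgraph of $G$ with vertex set $A'\cup B'$ consisting of all edges of $G$ between $A'$ and $B'$. A graph is $C_4$-free if it contains no $4$-cycle as a subgraph. *)

theory Defs
  imports Complex_Main
begin

definition graph :: "'a set \<Rightarrow> 'a set set \<Rightarrow> bool" where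
  "graph V E \<longleftrightarrow> finite V \<and> (\<forall>e\<in>E. \<exists>x y. x \<noteq> y \<and> x \<in> V \<and> y \<in> V \<and> e = {x, y})"

definition bipartite :: "'a set \<Rightarrow> 'a set set \<Rightarrow> bool" where
  "bipartite V E \<longleftrightarrow> (\<exists>X Y. X \<union> Y = V \<and> X \<inter> Y = {} \<and>
      (\<forall>e\<in>E. \<exists>x\<in>X. \<exists>y\<in>Y. e = {x, y}))"

definition avg_deg :: "'a set \<Rightarrow> 'a set set \<Rightarrow> real" where
  "avg_deg V E = 2 * real (card E) / real (card V)"

definition subgraph :: "'a set \<Rightarrow> 'a set set \<Rightarrow> 'a set \<Rightarrow> 'a set set \<Rightarrow> bool" where
  "subgraph V' E' V E \<longleftrightarrow> V' \<subseteq> V \<and> E' \<subseteq> E \<and> graph V' E'"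

definition C4_free :: "'a set set \<Rightarrow> bool" where
  "C4_free E \<longleftrightarrow> \<not> (\<exists>a b c d. distinct [a, b, c, d] \<and>
      {a, b} \<in> E \<and> {b, c} \<in> E \<and> {c, d} \<in> E \<and> {d, a} \<in> E)"

definition nbhd :: "'a set set \<Rightarrow> 'a \<Rightarrow> 'a set" where
  "nbhd E v = {u. {v, u} \<in> E}"

definition bip_edges :: "'a set set \<Rightarrow> 'a set \<Rightarrow> 'a set \<Rightarrow> 'a set set" where
  "bip_edges E A B = {e \<in> E. \<exists>a\<in>A. \<exists>b\<in>B. e = {a, b}}"

end

theory Submission
  imports Defs
begin

(*
  Let M be a maximal C4-free subgraph of G. Since no C4-free subgraph has average degree
  at least t, every subgraph of M has a vertex of degree < t, so some ranking of V gives
  each vertex fewer than t higher-ranked M-neighbours. An edge xy of G outside M closes a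
  path x a b y in M; for r = a or r = b, one end lies in N_M(r) and the other is joined to
  r by a path r u w in M whose middle vertex u is not ranked above both r and w, while
  bipartiteness keeps it out of N_M(r). Thus E(G) - M is covered by the graphs
  G[N_M(r), B_r], where the sets B_r of such "non-peak" second neighbours have total size
  at most 3 n t^2. If all these pieces had average degree < c = d^(1/5), then
  d <= (1 + 4c) t^2 <= 5 d^(7/10), which fails for d >= 5^10.
*)

lemma graph_finite: "graph V E \<Longrightarrow> finite V"
  by (simp add: graph_def)

lemma graph_edgeE:
  assumes "graph V E" "e \<in> E"
  obtains x y where "x \<noteq> y" "x \<in> V" "y \<in> V" "e = {x, y}"
  using assms unfolding graph_def by blast

lemma graph_edgeD:
  assumes "graph V E" "{u, w} \<in> E"
  shows "u \<in> V" "w \<in> V" "u \<noteq> w"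
  using graph_edgeE[OF assms] by (auto simp: doubleton_eq_iff)

lemma graph_finite_edges:
  assumes "graph V E"
  shows "finite E"
proof (rule finite_subset)
  show "E \<subseteq> Pow V" using graph_edgeE[OF assms] by blast
  show "finite (Pow V)" using graph_finite[OF assms] by simp
qed

lemma graph_subset: "graph V E \<Longrightarrow> E' \<subseteq> E \<Longrightarrow> graph V E'"
  unfolding graph_def by (meson subsetD)

lemma graph_induced:
  assumes "graph V E" "S \<subseteq> V"
  shows "graph S {e \<in> E. e \<subseteq> S}"
  unfolding graph_def
proof (intro conjI ballI)
  show "finite S" using finite_subset[OF assms(2) graph_finite[OF assms(1)]] .
  fix e assume "e \<in> {e \<in> E. e \<subseteq> S}"
  then obtain x y where "x \<noteq> y" "e = {x, y}" "e \<subseteq> S"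
    using graph_edgeE[OF assms(1)] by (metis (no_types, lifting) mem_Collect_eq)
  then show "\<exists>x y. x \<noteq> y \<and> x \<in> S \<and> y \<in> S \<and> e = {x, y}" by blast
qed

lemma nbhd_subset: "graph V E \<Longrightarrow> nbhd E v \<subseteq> V"
  unfolding nbhd_def by (auto dest: graph_edgeD(2))

lemma nbhd_mono: "E' \<subseteq> E \<Longrightarrow> nbhd E' v \<subseteq> nbhd E v"
  unfolding nbhd_def by blast

lemma card_nbhd_eq_card_incident:
  assumes "graph V E"
  shows "card (nbhd E v) = card {e \<in> E. v \<in> e}"
proof (rule bij_betw_same_card[of "\<lambda>w. {v, w}"], rule bij_betw_imageI)
  show "inj_on (\<lambda>w. {v, w}) (nbhd E v)" by (auto simp: inj_on_def doubleton_eq_iff)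
  show "(\<lambda>w. {v, w}) ` nbhd E v = {e \<in> E. v \<in> e}"
  proof (intro equalityI subsetI)
    fix e assume e: "e \<in> {e \<in> E. v \<in> e}"
    then obtain x y where "e = {x, y}" using graph_edgeE[OF assms] by blast
    with e have "e = {v, if x = v then y else x}" "e \<in> E" by auto
    then show "e \<in> (\<lambda>w. {v, w}) ` nbhd E v" unfolding nbhd_def by blast
  qed (auto simp: nbhd_def)
qed

lemma sum_card_nbhd:
  assumes "graph V E"
  shows "(\<Sum>v\<in>V. card (nbhd E v)) = 2 * card E"
proof -
  have two: "card {v \<in> V. v \<in> e} = 2" if "e \<in> E" for e
  proof -
    obtain x y where "x \<noteq> y" "x \<in> V" "y \<in> V" "e = {x, y}"
      using graph_edgeE[OF assms \<open>e \<in> E\<close>] .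
    then have "{v \<in> V. v \<in> e} = {x, y}" by auto
    then show ?thesis using \<open>x \<noteq> y\<close> by simp
  qed
  have "(\<Sum>v\<in>V. card (nbhd E v)) = (\<Sum>v\<in>V. \<Sum>e\<in>{e \<in> E. v \<in> e}. 1)"
    using card_nbhd_eq_card_incident[OF assms] by simp
  also have "\<dots> = (\<Sum>e\<in>E. \<Sum>v\<in>{v \<in> V. v \<in> e}. 1)"
    using graph_finite[OF assms] graph_finite_edges[OF assms] by (rule sum.swap_restrict)
  also have "\<dots> = 2 * card E" using two by simp
  finally show ?thesis .
qed

lemma avg_deg_ge_iff:
  assumes "finite V" "V \<noteq> {}"
  shows "c \<le> avg_deg V E \<longleftrightarrow> c * real (card V) \<le> 2 * real (card E)"
  using assms by (simp add: avg_deg_def le_divide_eq card_gt_0_iff)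

lemma exists_vertex_deg_less:
  assumes "graph V E" "V \<noteq> {}" "avg_deg V E < c"
  shows "\<exists>v\<in>V. real (card (nbhd E v)) < c"
proof (rule ccontr)
  assume "\<not> ?thesis"
  then have "c * real (card V) \<le> (\<Sum>v\<in>V. real (card (nbhd E v)))"
    using sum_mono[of V "\<lambda>_. c" "\<lambda>v. real (card (nbhd E v))"]
    by (simp add: not_less mult.commute)
  also have "\<dots> = 2 * real (card E)"
    using sum_card_nbhd[OF assms(1)] by (metis of_nat_mult of_nat_numeral of_nat_sum)
  finally show False
    using assms avg_deg_ge_iff[of V c E] graph_finite by fastforce
qed

lemma bipartite_no_triangle:
  assumes "bipartite V E" "{p, q} \<in> E" "{q, s} \<in> E" "{s, p} \<in> E"
  shows False
proof -
  obtain X Y where "X \<inter> Y = {}" and XY: "\<forall>e\<in>E. \<exists>x\<in>X. \<exists>y\<in>Y. e = {x, y}"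
    using assms(1) unfolding bipartite_def by blast
  then have side: "u \<in> X \<longleftrightarrow> w \<notin> X" if "{u, w} \<in> E" for u w
    using that by (fastforce simp: doubleton_eq_iff)
  show False using side[OF assms(2)] side[OF assms(3)] side[OF assms(4)] by blast
qed

lemma C4_free_subset: "M' \<subseteq> M \<Longrightarrow> C4_free M \<Longrightarrow> C4_free M'"
  unfolding C4_free_def by (meson subsetD)

lemma not_C4_free_insert:
  assumes "C4_free M" "\<not> C4_free (insert e M)"
  obtains x a b y
  where "e = {x, y}" "distinct [x, a, b, y]" "{x, a} \<in> M" "{a, b} \<in> M" "{b, y} \<in> M"
proof -
  note result = that
  have path: thesis if "e = {p, s}" "distinct [p, q, r, s]"
    "{p, q} \<in> insert e M" "{q, r} \<in> insert e M" "{r, s} \<in> insert e M" for p q r s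
  proof -
    have "{p, q} \<noteq> e" "{q, r} \<noteq> e" "{r, s} \<noteq> e"
      using that(1,2) by (auto simp: doubleton_eq_iff)
    with that show thesis by (intro result[of p s q r]) auto
  qed
  obtain a b c d where cyc: "distinct [a, b, c, d]" "{a, b} \<in> insert e M" "{b, c} \<in> insert e M"
    "{c, d} \<in> insert e M" "{d, a} \<in> insert e M"
    using assms(2) unfolding C4_free_def by auto
  have "\<not> ({a, b} \<in> M \<and> {b, c} \<in> M \<and> {c, d} \<in> M \<and> {d, a} \<in> M)"
    using assms(1) cyc(1) unfolding C4_free_def by auto
  then consider "e = {b, a}" | "e = {c, b}" | "e = {d, c}" | "e = {a, d}"
    using cyc(2-5) by (auto simp: insert_commute)
  then show thesis
  proof cases
    case 1
    show thesis by (rule path[OF 1 _ cyc(3-5)]) (use cyc(1) in auto)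
  next
    case 2
    show thesis by (rule path[OF 2 _ cyc(4,5,2)]) (use cyc(1) in auto)
  next
    case 3
    show thesis by (rule path[OF 3 _ cyc(5,2,3)]) (use cyc(1) in auto)
  next
    case 4
    show thesis by (rule path[OF 4 cyc(1-4)])
  qed
qed

lemma exists_maximal_C4_free:
  assumes "finite E"
  obtains M where "M \<subseteq> E" "C4_free M" "\<And>e. e \<in> E - M \<Longrightarrow> \<not> C4_free (insert e M)"
proof -
  let ?C = "{M. M \<subseteq> E \<and> C4_free M}"
  have "finite ?C" using assms by simp
  moreover have "?C \<noteq> {}"
  proof -
    have "{} \<in> ?C" unfolding C4_free_def by simp
    then show ?thesis by blast
  qed
  ultimately have "\<exists>M\<in>?C. \<forall>M'\<in>?C. M \<subseteq> M' \<longrightarrow> M = M'"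
    by (rule finite_has_maximal)
  then obtain M where "M \<in> ?C" and maximal: "\<forall>M'\<in>?C. M \<subseteq> M' \<longrightarrow> M = M'" ..
  then have M: "M \<subseteq> E" "C4_free M" by simp_all
  have "\<not> C4_free (insert e M)" if e: "e \<in> E - M" for e
  proof
    assume "C4_free (insert e M)"
    with M(1) e have "insert e M \<in> ?C" by blast
    then have "M = insert e M" using maximal[rule_format, OF _ subset_insertI] by simp
    then show False using e by blast
  qed
  with M show thesis by (rule that)
qed

lemma degeneracy_order:
  assumes "finite S"
    and "\<And>S'. S' \<subseteq> S \<Longrightarrow> S' \<noteq> {} \<Longrightarrow> \<exists>v\<in>S'. card {w \<in> S'. R v w} < t"
  shows "\<exists>f :: 'a \<Rightarrow> nat. inj_on f S \<and> (\<forall>v\<in>S. card {w \<in> S. R v w \<and> f v < f w} < t)"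
  using assms
proof (induction "card S" arbitrary: S)
  case 0
  then show ?case by simp
next
  case (Suc k)
  then have "S \<noteq> {}" by auto
  then obtain v where v: "v \<in> S" "card {w \<in> S. R v w} < t"
    using Suc.prems(2)[of S] by blast
  have "k = card (S - {v})" using Suc.hyps(2) v(1) by simp
  moreover have "\<And>S'. S' \<subseteq> S - {v} \<Longrightarrow> S' \<noteq> {} \<Longrightarrow> \<exists>u\<in>S'. card {w \<in> S'. R u w} < t"
    using Suc.prems(2) by blast
  ultimately obtain f :: "'a \<Rightarrow> nat" where f: "inj_on f (S - {v})"
    "\<And>u. u \<in> S - {v} \<Longrightarrow> card {w \<in> S - {v}. R u w \<and> f u < f w} < t"
    using Suc.hyps(1)[of "S - {v}"] Suc.prems(1) by blast
  define g where "g w = (if w = v then 0 else Suc (f w))" for w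
  have "inj_on g S" using f(1) unfolding g_def inj_on_def by auto
  moreover have "card {w \<in> S. R u w \<and> g u < g w} < t" if "u \<in> S" for u
  proof (cases "u = v")
    case True
    have "{w \<in> S. R u w \<and> g u < g w} \<subseteq> {w \<in> S. R v w}" using True by auto
    moreover have "finite {w \<in> S. R v w}" using Suc.prems(1) by simp
    ultimately show ?thesis using v(2) card_mono le_less_trans by metis
  next
    case False
    have "{w \<in> S. R u w \<and> g u < g w} = {w \<in> S - {v}. R u w \<and> f u < f w}"
      using False unfolding g_def by auto
    then show ?thesis using f(2) that False by simp
  qed
  ultimately show ?case by blast
qed

definition fwd_nbhd :: "'a set set \<Rightarrow> ('a \<Rightarrow> nat) \<Rightarrow> 'a \<Rightarrow> 'a set" where
  "fwd_nbhd M rk v = {w \<in> nbhd M v. rk v < rk w}"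

lemma fwd_nbhd_subset: "graph V M \<Longrightarrow> fwd_nbhd M rk v \<subseteq> V"
  unfolding fwd_nbhd_def using nbhd_subset[of V M v] by blast

lemma degenerate_order_of_sparse_C4_free:
  assumes "graph V E" "M \<subseteq> E" "C4_free M"
    and sparse: "\<not> (\<exists>V' E'. subgraph V' E' V E \<and> C4_free E' \<and> avg_deg V' E' \<ge> real t)"
  obtains rk :: "'a \<Rightarrow> nat" where "inj_on rk V" "\<And>v. v \<in> V \<Longrightarrow> card (fwd_nbhd M rk v) < t"
proof -
  have gM: "graph V M" using graph_subset assms(1,2) .
  have low: "\<exists>v\<in>S. card {w \<in> S. {v, w} \<in> M} < t" if S: "S \<subseteq> V" "S \<noteq> {}" for S
  proof -
    define MS where "MS = {e \<in> M. e \<subseteq> S}"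
    have gMS: "graph S MS" unfolding MS_def using graph_induced[OF gM S(1)] .
    have "subgraph S MS V E" unfolding subgraph_def using S(1) assms(2) gMS MS_def by auto
    moreover have "C4_free MS"
      by (rule C4_free_subset[OF _ assms(3)]) (simp add: MS_def)
    ultimately have "\<not> avg_deg S MS \<ge> real t" using sparse by blast
    then obtain v where "v \<in> S" "real (card (nbhd MS v)) < real t"
      using exists_vertex_deg_less[OF gMS S(2)] by (meson not_le)
    moreover have "nbhd MS v = {w \<in> S. {v, w} \<in> M}" if "v \<in> S"
      using that nbhd_subset[OF gMS] unfolding MS_def nbhd_def by auto
    ultimately show ?thesis by auto
  qed
  obtain rk :: "'a \<Rightarrow> nat" where "inj_on rk V"
    and "\<forall>v\<in>V. card {w \<in> V. {v, w} \<in> M \<and> rk v < rk w} < t"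
    using degeneracy_order[OF graph_finite[OF assms(1)] low] by blast
  moreover have "{w \<in> V. {v, w} \<in> M \<and> rk v < rk w} = fwd_nbhd M rk v" for v
    using nbhd_subset[OF gM] unfolding fwd_nbhd_def nbhd_def by auto
  ultimately show thesis using that by simp
qed

definition nonpeak_second_nbhd :: "'a set set \<Rightarrow> ('a \<Rightarrow> nat) \<Rightarrow> 'a \<Rightarrow> 'a set" where
  "nonpeak_second_nbhd M rk r =
    {w. w \<noteq> r \<and> w \<notin> nbhd M r \<and>
        (\<exists>u. {r, u} \<in> M \<and> {u, w} \<in> M \<and> (rk u < rk r \<or> rk u < rk w))}"

lemma nonpeak_second_nbhd_subset: "graph V M \<Longrightarrow> nonpeak_second_nbhd M rk r \<subseteq> V - {r}"
  unfolding nonpeak_second_nbhd_def using graph_edgeD(2)[of V M] by blast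

definition up_pairs :: "'a set \<Rightarrow> 'a set set \<Rightarrow> ('a \<Rightarrow> nat) \<Rightarrow> ('a \<times> 'a) set" where
  "up_pairs V M rk = (\<Union>r\<in>V. {r} \<times> (\<Union>u\<in>fwd_nbhd M rk r. fwd_nbhd M rk u))"

definition valley_pairs :: "'a set \<Rightarrow> 'a set set \<Rightarrow> ('a \<Rightarrow> nat) \<Rightarrow> ('a \<times> 'a) set" where
  "valley_pairs V M rk = (\<Union>u\<in>V. fwd_nbhd M rk u \<times> fwd_nbhd M rk u)"

lemma up_valley_pairs_subset:
  assumes "graph V M"
  shows "up_pairs V M rk \<subseteq> V \<times> V" "valley_pairs V M rk \<subseteq> V \<times> V"
  using fwd_nbhd_subset[OF assms, THEN subsetD] unfolding up_pairs_def valley_pairs_def by auto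

lemma card_up_pairs_le:
  assumes "graph V M" "\<And>u. u \<in> V \<Longrightarrow> card (fwd_nbhd M rk u) \<le> t"
  shows "card (up_pairs V M rk) \<le> card V * (t * t)"
proof -
  let ?F = "fwd_nbhd M rk"
  have finV: "finite V" using graph_finite[OF assms(1)] .
  have "card (\<Union>u\<in>?F r. ?F u) \<le> t * t" if "r \<in> V" for r
  proof -
    have "card (\<Union>u\<in>?F r. ?F u) \<le> (\<Sum>u\<in>?F r. card (?F u))"
      using finite_subset[OF fwd_nbhd_subset[OF assms(1)] finV] by (rule card_UN_le)
    also have "\<dots> \<le> (\<Sum>u\<in>?F r. t)"
      using fwd_nbhd_subset[OF assms(1)] assms(2) by (intro sum_mono) blast
    also have "\<dots> \<le> t * t" using assms(2)[OF that] by simp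
    finally show ?thesis .
  qed
  then have "(\<Sum>r\<in>V. card ({r} \<times> (\<Union>u\<in>?F r. ?F u))) \<le> (\<Sum>r\<in>V. t * t)"
    by (intro sum_mono) (simp add: card_cartesian_product_singleton)
  moreover have "card (up_pairs V M rk) \<le> (\<Sum>r\<in>V. card ({r} \<times> (\<Union>u\<in>?F r. ?F u)))"
    unfolding up_pairs_def using finV by (rule card_UN_le)
  ultimately show ?thesis by simp
qed

lemma card_valley_pairs_le:
  assumes "graph V M" "\<And>u. u \<in> V \<Longrightarrow> card (fwd_nbhd M rk u) \<le> t"
  shows "card (valley_pairs V M rk) \<le> card V * (t * t)"
proof -
  have "card (valley_pairs V M rk) \<le> (\<Sum>u\<in>V. card (fwd_nbhd M rk u \<times> fwd_nbhd M rk u))"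
    unfolding valley_pairs_def using graph_finite[OF assms(1)] by (rule card_UN_le)
  also have "\<dots> \<le> (\<Sum>u\<in>V. t * t)"
    using assms(2) by (intro sum_mono) (simp add: card_cartesian_product mult_le_mono)
  finally show ?thesis by simp
qed

lemma Sigma_nonpeak_second_nbhd_subset:
  assumes "graph V M" "inj_on rk V"
  shows "Sigma V (nonpeak_second_nbhd M rk)
    \<subseteq> up_pairs V M rk \<union> valley_pairs V M rk \<union> prod.swap ` up_pairs V M rk"
proof
  fix p assume "p \<in> Sigma V (nonpeak_second_nbhd M rk)"
  then obtain r w u where p: "p = (r, w)" "r \<in> V"
    and ru: "{r, u} \<in> M" and uw: "{u, w} \<in> M" and low: "rk u < rk r \<or> rk u < rk w"
    unfolding nonpeak_second_nbhd_def by blast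
  have "u \<in> V" "w \<in> V" "u \<noteq> r" "u \<noteq> w"
    using graph_edgeD[OF assms(1) ru] graph_edgeD[OF assms(1) uw] by auto
  then have "rk u \<noteq> rk r" "rk u \<noteq> rk w"
    using assms(2) p(2) unfolding inj_on_def by metis+
  then consider "rk u < rk r" "rk u < rk w" | "rk w < rk u" "rk u < rk r"
    | "rk r < rk u" "rk u < rk w"
    using low by linarith
  then show "p \<in> up_pairs V M rk \<union> valley_pairs V M rk \<union> prod.swap ` up_pairs V M rk"
  proof cases
    case 1
    then have "r \<in> fwd_nbhd M rk u" "w \<in> fwd_nbhd M rk u"
      using ru uw unfolding fwd_nbhd_def nbhd_def by (auto simp: insert_commute)
    then show ?thesis unfolding valley_pairs_def using \<open>u \<in> V\<close> p(1) by blast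
  next
    case 2
    then have "u \<in> fwd_nbhd M rk w" "r \<in> fwd_nbhd M rk u"
      using ru uw unfolding fwd_nbhd_def nbhd_def by (auto simp: insert_commute)
    then have "(w, r) \<in> up_pairs V M rk" unfolding up_pairs_def using \<open>w \<in> V\<close> by blast
    then show ?thesis using p(1) by force
  next
    case 3
    then have "u \<in> fwd_nbhd M rk r" "w \<in> fwd_nbhd M rk u"
      using ru uw unfolding fwd_nbhd_def nbhd_def by (auto simp: insert_commute)
    then show ?thesis unfolding up_pairs_def using p by blast
  qed
qed

lemma sum_card_nonpeak_second_nbhd_le:
  assumes "graph V M" "inj_on rk V" "\<And>u. u \<in> V \<Longrightarrow> card (fwd_nbhd M rk u) \<le> t"
  shows "(\<Sum>r\<in>V. card (nonpeak_second_nbhd M rk r)) \<le> 3 * (card V * (t * t))"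
proof -
  let ?up = "up_pairs V M rk" and ?valley = "valley_pairs V M rk"
  have finV: "finite V" using graph_finite[OF assms(1)] .
  have "?up \<union> ?valley \<union> prod.swap ` ?up \<subseteq> V \<times> V"
    using up_valley_pairs_subset[OF assms(1), of rk] by auto
  then have "finite (?up \<union> ?valley \<union> prod.swap ` ?up)"
    by (rule finite_subset) (simp add: finV)
  then have "card (Sigma V (nonpeak_second_nbhd M rk)) \<le> card (?up \<union> ?valley \<union> prod.swap ` ?up)"
    using Sigma_nonpeak_second_nbhd_subset[OF assms(1,2)] by (rule card_mono)
  also have "\<dots> \<le> card ?up + card ?valley + card (prod.swap ` ?up)"
    by (meson card_Un_le add_le_mono1 le_trans)
  also have "\<dots> = 2 * card ?up + card ?valley"
    by (simp add: card_image)
  also have "\<dots> \<le> 3 * (card V * (t * t))"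
    using card_up_pairs_le[OF assms(1,3)] card_valley_pairs_le[OF assms(1,3)] by linarith
  finally have "card (Sigma V (nonpeak_second_nbhd M rk)) \<le> 3 * (card V * (t * t))" .
  moreover have "finite (nonpeak_second_nbhd M rk r)" for r
    using finite_subset[OF nonpeak_second_nbhd_subset[OF assms(1)]] finV by simp
  ultimately show ?thesis
    using finV by (simp add: card_SigmaI)
qed

lemma edge_in_local_bip_edges:
  assumes "graph V E" "bipartite V E" "M \<subseteq> E" "C4_free M"
    and e: "e \<in> E - M" "\<not> C4_free (insert e M)" and "inj_on rk V"
  shows "\<exists>r\<in>V. e \<in> bip_edges E (nbhd M r) (nonpeak_second_nbhd M rk r)"
proof -
  obtain x a b y where xy: "e = {x, y}" and dist: "distinct [x, a, b, y]"
    and xa: "{x, a} \<in> M" and ab: "{a, b} \<in> M" and yb: "{b, y} \<in> M"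
    using not_C4_free_insert[OF assms(4) e(2)] .
  have gM: "graph V M" using graph_subset assms(1,3) .
  have V: "x \<in> V" "a \<in> V" "b \<in> V" "y \<in> V"
    using graph_edgeD[OF gM xa] graph_edgeD[OF gM yb] by auto
  have "rk a \<noteq> rk b" using dist V(2,3) assms(7) unfolding inj_on_def by auto
  have no_triangle: "{p, s} \<notin> M" if "{p, q} \<in> M" "{q, s} \<in> M" for p q s
    using bipartite_no_triangle[OF assms(2)] that assms(3) by (auto simp: insert_commute)
  show ?thesis
  proof (cases "rk a < rk b \<or> rk a < rk x")
    case True
    have "y \<in> nbhd M b" using yb unfolding nbhd_def by simp
    moreover have "x \<in> nonpeak_second_nbhd M rk b"
      unfolding nonpeak_second_nbhd_def nbhd_def
      using dist ab xa True no_triangle[OF xa ab] by (auto simp: insert_commute)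
    ultimately have "e \<in> bip_edges E (nbhd M b) (nonpeak_second_nbhd M rk b)"
      unfolding bip_edges_def using xy e(1) by (auto simp: insert_commute)
    then show ?thesis using V(3) by blast
  next
    case False
    with \<open>rk a \<noteq> rk b\<close> have "rk b < rk a" by linarith
    have "x \<in> nbhd M a" using xa unfolding nbhd_def by (simp add: insert_commute)
    moreover have "y \<in> nonpeak_second_nbhd M rk a"
      unfolding nonpeak_second_nbhd_def nbhd_def
      using dist ab yb \<open>rk b < rk a\<close> no_triangle[OF ab yb] by auto
    ultimately have "e \<in> bip_edges E (nbhd M a) (nonpeak_second_nbhd M rk a)"
      unfolding bip_edges_def using xy e(1) by auto
    then show ?thesis using V(2) by blast
  qed
qed

lemma card_edges_le_local_bip_edges:
  assumes G: "graph V E" "bipartite V E"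
    and M: "M \<subseteq> E" "C4_free M" "\<And>e. e \<in> E - M \<Longrightarrow> \<not> C4_free (insert e M)"
    and "inj_on rk V"
  shows "card E \<le> card M + (\<Sum>r\<in>V. card (bip_edges E (nbhd M r) (nonpeak_second_nbhd M rk r)))"
proof -
  let ?BE = "\<lambda>r. bip_edges E (nbhd M r) (nonpeak_second_nbhd M rk r)"
  have finV: "finite V" and finE: "finite E"
    using graph_finite[OF G(1)] graph_finite_edges[OF G(1)] .
  have "E - M \<subseteq> (\<Union>r\<in>V. ?BE r)"
    using edge_in_local_bip_edges[OF G M(1,2) _ M(3) assms(6)] by blast
  then have "card (E - M) \<le> card (\<Union>r\<in>V. ?BE r)"
    using finV finE by (intro card_mono) (auto simp: bip_edges_def)
  also have "\<dots> \<le> (\<Sum>r\<in>V. card (?BE r))"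
    using finV by (rule card_UN_le)
  finally show ?thesis
    using card_Diff_subset[OF finite_subset[OF M(1) finE] M(1)] card_mono[OF finE M(1)] by linarith
qed

lemma card_bip_edges_le_of_avg_deg_less:
  assumes "finite A" "finite B" "0 \<le> c" "avg_deg (A \<union> B) (bip_edges E A B) < c"
  shows "2 * real (card (bip_edges E A B)) \<le> c * (real (card A) + real (card B))"
proof (cases "A \<union> B = {}")
  case True
  then show ?thesis unfolding bip_edges_def by simp
next
  case False
  then have "2 * real (card (bip_edges E A B)) < c * real (card (A \<union> B))"
    using assms avg_deg_ge_iff[of "A \<union> B" c] by (meson finite_UnI not_le)
  also have "\<dots> \<le> c * (real (card A) + real (card B))"
    using assms(3) card_Un_le[of A B] by (intro mult_left_mono) linarith+
  finally show ?thesis by linarith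
qed

lemma card_edges_bound_of_locally_sparse:
  assumes G: "graph V E" "bipartite V E"
    and M: "M \<subseteq> E" "C4_free M" "\<And>e. e \<in> E - M \<Longrightarrow> \<not> C4_free (insert e M)"
    and rank: "inj_on rk V" "\<And>u. u \<in> V \<Longrightarrow> card (fwd_nbhd M rk u) \<le> t"
    and "0 \<le> c"
    and no_dense_piece: "\<And>r A' B'. r \<in> V \<Longrightarrow> A' \<inter> B' = {} \<Longrightarrow> A' \<subseteq> nbhd E r \<Longrightarrow>
      B' \<subseteq> V - {r} \<Longrightarrow> avg_deg (A' \<union> B') (bip_edges E A' B') < c"
  shows "2 * real (card E) \<le> (1 + c) * (2 * real (card M)) + 3 * c * real (card V) * real t ^ 2"
proof -
  define A where "A = nbhd M"
  define B where "B = nonpeak_second_nbhd M rk"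
  let ?a = "\<lambda>r. real (card (A r))" and ?b = "\<lambda>r. real (card (B r))"
  let ?e = "\<lambda>r. real (card (bip_edges E (A r) (B r)))"
  have gM: "graph V M" using graph_subset G(1) M(1) .
  have finV: "finite V" using graph_finite[OF G(1)] .
  have finA: "finite (A r)" for r
    unfolding A_def using finite_subset[OF nbhd_subset[OF gM] finV] .
  have BV: "B r \<subseteq> V - {r}" for r
    unfolding B_def by (rule nonpeak_second_nbhd_subset[OF gM])
  have finB: "finite (B r)" for r
    using finite_subset[OF _ finV] BV by blast
  have local_sparse: "avg_deg (A r \<union> B r) (bip_edges E (A r) (B r)) < c" if "r \<in> V" for r
  proof (rule no_dense_piece[OF that _ _ BV])
    show "A r \<inter> B r = {}" "A r \<subseteq> nbhd E r"
      unfolding A_def B_def nonpeak_second_nbhd_def using nbhd_mono[OF M(1)] by auto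
  qed
  have "card E \<le> card M + (\<Sum>r\<in>V. card (bip_edges E (A r) (B r)))"
    using card_edges_le_local_bip_edges[OF G M rank(1)] unfolding A_def B_def .
  then have "real (card E) \<le> real (card M) + (\<Sum>r\<in>V. ?e r)"
    by (metis of_nat_add of_nat_le_iff of_nat_sum)
  then have "2 * real (card E) \<le> 2 * real (card M) + (\<Sum>r\<in>V. 2 * ?e r)"
    by (simp add: sum_distrib_left[symmetric])
  also have "\<dots> \<le> 2 * real (card M) + (\<Sum>r\<in>V. c * (?a r + ?b r))"
    using card_bip_edges_le_of_avg_deg_less[OF finA finB \<open>0 \<le> c\<close> local_sparse]
    by (intro add_left_mono sum_mono) simp
  also have "\<dots> = 2 * real (card M) + c * ((\<Sum>r\<in>V. ?a r) + (\<Sum>r\<in>V. ?b r))"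
    by (simp add: sum.distrib flip: sum_distrib_left)
  finally have E_le: "2 * real (card E) \<le> 2 * real (card M) + c * ((\<Sum>r\<in>V. ?a r) + (\<Sum>r\<in>V. ?b r))" .
  have sum_A: "(\<Sum>r\<in>V. ?a r) = 2 * real (card M)"
    using sum_card_nbhd[OF gM] unfolding A_def by (metis of_nat_mult of_nat_numeral of_nat_sum)
  have "real (\<Sum>r\<in>V. card (B r)) \<le> real (3 * (card V * (t * t)))"
    using sum_card_nonpeak_second_nbhd_le[OF gM rank] unfolding B_def by (simp only: of_nat_le_iff)
  then have "(\<Sum>r\<in>V. ?b r) \<le> 3 * real (card V) * real t ^ 2"
    by (simp add: power2_eq_square)
  then have "c * (\<Sum>r\<in>V. ?b r) \<le> c * (3 * real (card V) * real t ^ 2)"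
    using \<open>0 \<le> c\<close> by (rule mult_left_mono)
  with E_le sum_A show ?thesis by (simp add: algebra_simps)
qed

theorem avg_deg_le_of_locally_sparse:
  assumes G: "graph V E" "bipartite V E"
    and M: "M \<subseteq> E" "C4_free M" "\<And>e. e \<in> E - M \<Longrightarrow> \<not> C4_free (insert e M)"
    and rank: "inj_on rk V" "\<And>u. u \<in> V \<Longrightarrow> card (fwd_nbhd M rk u) \<le> t"
    and "t \<ge> 1" "avg_deg V M \<le> t" "0 \<le> c"
    and no_dense_piece: "\<And>r A' B'. r \<in> V \<Longrightarrow> A' \<inter> B' = {} \<Longrightarrow> A' \<subseteq> nbhd E r \<Longrightarrow>
      B' \<subseteq> V - {r} \<Longrightarrow> avg_deg (A' \<union> B') (bip_edges E A' B') < c"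
  shows "avg_deg V E \<le> (1 + 4 * c) * real t ^ 2"
proof (cases "V = {}")
  case True
  then show ?thesis using \<open>0 \<le> c\<close> by (simp add: avg_deg_def)
next
  case False
  define n where "n = real (card V)"
  have finV: "finite V" using graph_finite[OF G(1)] .
  have E_bound: "2 * real (card E) \<le> (1 + c) * (2 * real (card M)) + 3 * c * n * real t ^ 2"
    unfolding n_def
    by (rule card_edges_bound_of_locally_sparse[OF G M rank \<open>0 \<le> c\<close> no_dense_piece])
  have "2 * real (card M) \<le> real t * n"
    using \<open>avg_deg V M \<le> t\<close> False finV unfolding avg_deg_def n_def
    by (simp add: divide_le_eq card_gt_0_iff)
  also have "\<dots> \<le> real t ^ 2 * n"
    using \<open>t \<ge> 1\<close> unfolding n_def power2_eq_square by (intro mult_right_mono) auto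
  finally have "(1 + c) * (2 * real (card M)) \<le> (1 + c) * (real t ^ 2 * n)"
    using \<open>0 \<le> c\<close> by (intro mult_left_mono) auto
  with E_bound have "2 * real (card E) \<le> (1 + 4 * c) * real t ^ 2 * n"
    by (simp add: algebra_simps)
  then show ?thesis
    using False finV unfolding avg_deg_def n_def by (simp add: divide_le_eq card_gt_0_iff)
qed

lemma powr_fifth_bound:
  fixes d t :: real
  assumes d: "5 ^ 10 \<le> d" and t: "0 \<le> t" "t ^ 4 \<le> d"
  shows "(1 + 4 * d powr (1/5)) * t\<^sup>2 < d"
proof -
  have d0: "0 < d" using d by simp
  have t2: "t\<^sup>2 \<le> d powr (1/2)"
  proof (rule power2_le_imp_le)
    show "(t\<^sup>2)\<^sup>2 \<le> (d powr (1/2))\<^sup>2"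
      using t(2) d0 by (simp add: powr_half_sqrt flip: power_mult)
  qed simp
  have "1 \<le> d powr (1/5)" using d by (intro ge_one_powr_ge_zero) auto
  then have "(1 + 4 * d powr (1/5)) * t\<^sup>2 \<le> (5 * d powr (1/5)) * d powr (1/2)"
    using t2 by (intro mult_mono) auto
  also have "\<dots> = 5 * d powr (7/10)"
    by (simp add: powr_add[symmetric])
  also have "\<dots> < d powr (3/10) * d powr (7/10)"
  proof -
    have "(5 ^ 10 :: real) powr (3/10) \<le> d powr (3/10)" using d by (intro powr_mono2) auto
    moreover have "(5 ^ 10 :: real) powr (3/10) = 125"
      by (simp add: powr_realpow[symmetric] powr_powr)
    ultimately show ?thesis using d0 by simp
  qed
  also have "\<dots> = d" using d0 by (simp add: powr_add[symmetric])
  finally show ?thesis .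
qed

theorem corollary7:
  shows "\<exists>d0::real. \<forall>d::real. \<forall>t::nat. \<forall>(V::nat set) E.
    d \<ge> d0 \<longrightarrow> t > 0 \<longrightarrow> graph V E \<longrightarrow> bipartite V E \<longrightarrow>
    avg_deg V E = d \<longrightarrow> d \<ge> real t ^ 4 \<longrightarrow>
    \<not> (\<exists>V' E'. subgraph V' E' V E \<and> C4_free E' \<and> avg_deg V' E' \<ge> real t) \<longrightarrow>
    (\<exists>v\<in>V. \<exists>A' B'. A' \<inter> B' = {} \<and> A' \<subseteq> nbhd E v \<and> B' \<subseteq> V - {v} \<and>
       avg_deg (A' \<union> B') (bip_edges E A' B') \<ge> d powr (1/5))"
proof (intro exI[of _ "5 ^ 10"] allI impI)
  fix d :: real and t :: nat and V :: "nat set" and E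
  assume d: "d \<ge> 5 ^ 10" and "t > 0" and G: "graph V E" "bipartite V E" and "avg_deg V E = d"
    and "d \<ge> real t ^ 4"
    and sparse: "\<not> (\<exists>V' E'. subgraph V' E' V E \<and> C4_free E' \<and> avg_deg V' E' \<ge> real t)"
  obtain M where M: "M \<subseteq> E" "C4_free M" "\<And>e. e \<in> E - M \<Longrightarrow> \<not> C4_free (insert e M)"
    using exists_maximal_C4_free[OF graph_finite_edges[OF G(1)]] by blast
  obtain rk where rk: "inj_on rk V" "\<And>v. v \<in> V \<Longrightarrow> card (fwd_nbhd M rk v) < t"
    using degenerate_order_of_sparse_C4_free[OF G(1) M(1,2) sparse] by blast
  have "subgraph V M V E"
    using graph_subset[OF G(1) M(1)] M(1) by (simp add: subgraph_def)
  then have "avg_deg V M \<le> real t" using sparse M(2) by fastforce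
  show "\<exists>v\<in>V. \<exists>A' B'. A' \<inter> B' = {} \<and> A' \<subseteq> nbhd E v \<and> B' \<subseteq> V - {v} \<and>
       avg_deg (A' \<union> B') (bip_edges E A' B') \<ge> d powr (1/5)"
  proof (rule ccontr)
    assume "\<not> ?thesis"
    then have "avg_deg V E \<le> (1 + 4 * d powr (1/5)) * real t ^ 2"
      using \<open>t > 0\<close> \<open>avg_deg V M \<le> real t\<close> less_imp_le[OF rk(2)]
      by (intro avg_deg_le_of_locally_sparse[OF G M rk(1)]) (auto simp: not_le)
    then show False
      using powr_fifth_bound[OF d, of "real t"] \<open>avg_deg V E = d\<close> \<open>d \<ge> real t ^ 4\<close> by simp
  qed
qed

end
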